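(* Let $G$ be a group with an involution $\theta$, $H=G^\theta$, let $Q\subseteq G$ be a subgroup and $x\in G$. Then there is a canonical bijection \[ \iota_Q^{-1}\big(\iota_Q(QxH)\big)\ \longleftrightarrow\ \ker\Big(H^1(\langle x.\theta\rangle, Q(x))\longrightarrow H^1(\langle x.\theta\rangle, G)\Big), \] where $Q(x):=Q\cap x.\theta(Q)$ and the map is induced by the inclusion $Q(x)\subseteq G$.
   Context: $\iota(g)=g\theta(g)^{-1}$ and $\iota_Q:Q\backslash G/H\to Q\backslash G/\theta(Q)$ is the induced map on double cosets. $x.\theta:=\operatorname{int}_x\circ\theta\circ\operatorname{int}_{x^{-1}}$ (an involution, which preserves $Q(x)$), where $\operatorname{int}_g(y)=gyg^{-1}$. For a group $A$ with involution $\sigma$, $Z^1(\sigma,A)=\{a\in A:\sigma(a)=a^{-1}\}$, $A$ acts on it by $g.a=ga\sigma(g)^{-1}$, and $H^1(\langle\sigma\rangle,A):=Z^1(\sigma,A)/A$, a pointed set with base point the class of $e$; the kernel of a map of pointed sets is the preimage of the base point. *)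

theory Defs
  imports "HOL-Algebra.Group"
begin

definition iota :: "('a, 'b) monoid_scheme \<Rightarrow> ('a \<Rightarrow> 'a) \<Rightarrow> 'a \<Rightarrow> 'a" where
  "iota G \<theta> g = g \<otimes>\<^bsub>G\<^esub> inv\<^bsub>G\<^esub> (\<theta> g)"

definition fixgroup :: "('a, 'b) monoid_scheme \<Rightarrow> ('a \<Rightarrow> 'a) \<Rightarrow> 'a set" where
  "fixgroup G \<theta> = {g \<in> carrier G. \<theta> g = g}"

definition dcoset :: "('a, 'b) monoid_scheme \<Rightarrow> 'a set \<Rightarrow> 'a \<Rightarrow> 'a set \<Rightarrow> 'a set" where
  "dcoset G A g B = {a \<otimes>\<^bsub>G\<^esub> g \<otimes>\<^bsub>G\<^esub> b | a b. a \<in> A \<and> b \<in> B}"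

definition dcosets :: "('a, 'b) monoid_scheme \<Rightarrow> 'a set \<Rightarrow> 'a set \<Rightarrow> 'a set set" where
  "dcosets G A B = {dcoset G A g B | g. g \<in> carrier G}"

text \<open>iota_Q : Q\G/H -> Q\G/theta(Q), QgH |-> Q iota(g) theta(Q)
  (evaluated at an arbitrary representative; well defined).\<close>
definition iotaQ :: "('a, 'b) monoid_scheme \<Rightarrow> ('a \<Rightarrow> 'a) \<Rightarrow> 'a set \<Rightarrow> 'a set \<Rightarrow> 'a set" where
  "iotaQ G \<theta> Q D = dcoset G Q (iota G \<theta> (SOME g. g \<in> D)) (\<theta> ` Q)"

definition xtheta :: "('a, 'b) monoid_scheme \<Rightarrow> ('a \<Rightarrow> 'a) \<Rightarrow> 'a \<Rightarrow> 'a \<Rightarrow> 'a" where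
  "xtheta G \<theta> x = (\<lambda>y. x \<otimes>\<^bsub>G\<^esub> \<theta> (inv\<^bsub>G\<^esub> x \<otimes>\<^bsub>G\<^esub> y \<otimes>\<^bsub>G\<^esub> x) \<otimes>\<^bsub>G\<^esub> inv\<^bsub>G\<^esub> x)"

definition Qx :: "('a, 'b) monoid_scheme \<Rightarrow> ('a \<Rightarrow> 'a) \<Rightarrow> 'a set \<Rightarrow> 'a \<Rightarrow> 'a set" where
  "Qx G \<theta> Q x = Q \<inter> xtheta G \<theta> x ` Q"

definition Z1 :: "('a, 'b) monoid_scheme \<Rightarrow> ('a \<Rightarrow> 'a) \<Rightarrow> 'a set \<Rightarrow> 'a set" where
  "Z1 G \<sigma> A = {a \<in> A. \<sigma> a = inv\<^bsub>G\<^esub> a}"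

definition h1class :: "('a, 'b) monoid_scheme \<Rightarrow> ('a \<Rightarrow> 'a) \<Rightarrow> 'a set \<Rightarrow> 'a \<Rightarrow> 'a set" where
  "h1class G \<sigma> A a = {g \<otimes>\<^bsub>G\<^esub> a \<otimes>\<^bsub>G\<^esub> inv\<^bsub>G\<^esub> (\<sigma> g) | g. g \<in> A}"

definition H1 :: "('a, 'b) monoid_scheme \<Rightarrow> ('a \<Rightarrow> 'a) \<Rightarrow> 'a set \<Rightarrow> 'a set set" where
  "H1 G \<sigma> A = h1class G \<sigma> A ` Z1 G \<sigma> A"

text \<open>Map H^1(sigma, A) -> H^1(sigma, B) induced by inclusion A \<subseteq> B
  (evaluated at an arbitrary representative; well defined).\<close>
definition H1map :: "('a, 'b) monoid_scheme \<Rightarrow> ('a \<Rightarrow> 'a) \<Rightarrow> 'a set \<Rightarrow> 'a set \<Rightarrow> 'a set" where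
  "H1map G \<sigma> B c = h1class G \<sigma> B (SOME a. a \<in> c)"

definition H1ker :: "('a, 'b) monoid_scheme \<Rightarrow> ('a \<Rightarrow> 'a) \<Rightarrow> 'a set \<Rightarrow> 'a set \<Rightarrow> 'a set set" where
  "H1ker G \<sigma> A B = {c \<in> H1 G \<sigma> A. H1map G \<sigma> B c = h1class G \<sigma> B \<one>\<^bsub>G\<^esub>}"

end

theory Submission
  imports Defs
begin

text \<open>Put \<open>\<sigma> = x.\<theta>\<close> and \<open>c(y) = \<iota>(y) \<iota>(x)\<inverse>\<close>. Then \<open>c(y) = g \<sigma>(g)\<inverse>\<close> for \<open>g = y x\<inverse>\<close>,
  so \<open>c(y)\<close> is a \<open>\<sigma>\<close>-cocycle which is a coboundary in \<open>G\<close>, and every such coboundary is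
  some \<open>c(y)\<close>. A double coset \<open>QyH\<close> lies in the fibre of \<open>\<iota>\<^sub>Q\<close> over \<open>QxH\<close> iff it has a
  representative \<open>y\<close> with \<open>c(y) \<in> Q\<close>, and a cocycle lying in \<open>Q\<close> lies in \<open>Q(x)\<close>.
  Finally \<open>c(qy) = q c(y) \<sigma>(q)\<inverse>\<close>, while \<open>\<iota>(y') = \<iota>(y)\<close> forces \<open>y' \<in> yH\<close>; hence two such
  representatives lie in the same double coset iff their cocycles are \<open>Q(x)\<close>-cohomologous.\<close>

lemma ex_bij_betw_factor:
  assumes "\<pi> ` T = L" and "f ` T = K"
    and "\<And>y y'. y \<in> T \<Longrightarrow> y' \<in> T \<Longrightarrow> \<pi> y = \<pi> y' \<longleftrightarrow> f y = f y'"
  shows "\<exists>\<Phi>. bij_betw \<Phi> L K \<and> (\<forall>y \<in> T. \<Phi> (\<pi> y) = f y)"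
proof -
  define \<Phi> where "\<Phi> D = f (SOME y. y \<in> T \<and> \<pi> y = D)" for D
  have \<Phi>_\<pi>: "\<Phi> (\<pi> y) = f y" if "y \<in> T" for y
  proof -
    from that have "\<exists>y'. y' \<in> T \<and> \<pi> y' = \<pi> y"
      by blast
    then have "(SOME y'. y' \<in> T \<and> \<pi> y' = \<pi> y) \<in> T \<and> \<pi> (SOME y'. y' \<in> T \<and> \<pi> y' = \<pi> y) = \<pi> y"
      by (rule someI_ex)
    then show ?thesis
      using assms(3) that unfolding \<Phi>_def by blast
  qed
  have "inj_on \<Phi> L"
    using assms(1,3) \<Phi>_\<pi> by (auto intro!: inj_onI)
  moreover have "\<Phi> ` L = K"
    using assms(1,2) \<Phi>_\<pi> by (force simp: image_image)
  ultimately show ?thesis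
    using \<Phi>_\<pi> unfolding bij_betw_def by blast
qed

lemma (in group) m_inv_cancel_left:
  "x \<in> carrier G \<Longrightarrow> y \<in> carrier G \<Longrightarrow> x \<otimes> (inv x \<otimes> y) = y"
  by (simp flip: m_assoc)

lemma (in group) inv_m_cancel_left:
  "x \<in> carrier G \<Longrightarrow> y \<in> carrier G \<Longrightarrow> inv x \<otimes> (x \<otimes> y) = y"
  by (simp flip: m_assoc)

lemmas (in group) group_normalize = m_assoc inv_mult_group m_inv_cancel_left inv_m_cancel_left

lemma (in group) dcoset_mem: "a \<in> A \<Longrightarrow> b \<in> B \<Longrightarrow> a \<otimes> g \<otimes> b \<in> dcoset G A g B"
  by (auto simp: dcoset_def)

lemma (in group) dcoset_self:
  "subgroup A G \<Longrightarrow> subgroup B G \<Longrightarrow> g \<in> carrier G \<Longrightarrow> g \<in> dcoset G A g B"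
  using dcoset_mem[of \<one> A \<one> B g] by (simp add: subgroup.one_closed)

lemma (in group) dcoset_subset_of_mem:
  assumes A: "subgroup A G" and B: "subgroup B G" and g: "g \<in> carrier G"
    and z: "z \<in> dcoset G A g B"
  shows "dcoset G A z B \<subseteq> dcoset G A g B"
proof
  fix w assume "w \<in> dcoset G A z B"
  then obtain a' b' where a': "a' \<in> A" and b': "b' \<in> B" and w: "w = a' \<otimes> z \<otimes> b'"
    by (auto simp: dcoset_def)
  obtain a b where a: "a \<in> A" and b: "b \<in> B" and zab: "z = a \<otimes> g \<otimes> b"
    using z by (auto simp: dcoset_def)
  have "w = (a' \<otimes> a) \<otimes> g \<otimes> (b \<otimes> b')"
    using w zab a a' b b' g by (simp add: subgroup.mem_carrier[OF A] subgroup.mem_carrier[OF B] m_assoc)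
  then show "w \<in> dcoset G A g B"
    using dcoset_mem subgroup.m_closed[OF A a' a] subgroup.m_closed[OF B b b'] by simp
qed

lemma (in group) dcoset_sym:
  assumes A: "subgroup A G" and B: "subgroup B G" and g: "g \<in> carrier G"
    and z: "z \<in> dcoset G A g B"
  shows "g \<in> dcoset G A z B"
proof -
  obtain a b where a: "a \<in> A" and b: "b \<in> B" and zab: "z = a \<otimes> g \<otimes> b"
    using z by (auto simp: dcoset_def)
  have "g = inv a \<otimes> z \<otimes> inv b"
    using zab a b g by (simp add: subgroup.mem_carrier[OF A] subgroup.mem_carrier[OF B] group_normalize)
  then show ?thesis
    using dcoset_mem subgroup.m_inv_closed[OF A a] subgroup.m_inv_closed[OF B b] by simp
qed

lemma (in group) dcoset_eq_of_mem:
  assumes "subgroup A G" and "subgroup B G" and "g \<in> carrier G" and "z \<in> dcoset G A g B"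
  shows "dcoset G A z B = dcoset G A g B"
proof -
  have "z \<in> carrier G"
    using assms by (auto simp: dcoset_def dest: subgroup.mem_carrier)
  then show ?thesis
    using assms dcoset_subset_of_mem dcoset_sym by (metis subset_antisym)
qed

lemma (in group) dcoset_eq_iff_mem:
  assumes "subgroup A G" and "subgroup B G" and "a \<in> carrier G" and "b \<in> carrier G"
  shows "dcoset G A a B = dcoset G A b B \<longleftrightarrow> a \<in> dcoset G A b B"
  using assms dcoset_eq_of_mem dcoset_self by metis

lemma (in group) dcosets_eq_dcoset_of_mem:
  assumes "subgroup A G" and "subgroup B G" and "D \<in> dcosets G A B" and "y \<in> D"
  shows "y \<in> carrier G" and "D = dcoset G A y B"
proof -
  obtain g where g: "g \<in> carrier G" and D: "D = dcoset G A g B"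
    using assms(3) by (auto simp: dcosets_def)
  show "D = dcoset G A y B"
    using dcoset_eq_of_mem[OF assms(1,2) g] assms(4) D by simp
  show "y \<in> carrier G"
    using assms(1,2,4) g D by (auto simp: dcoset_def dest: subgroup.mem_carrier)
qed

context group
begin

context
  fixes \<sigma> assumes sigma_hom: "\<sigma> \<in> hom G G"
begin

interpretation sigma: group_hom G G \<sigma>
  using sigma_hom by (simp add: group_hom_def group_hom_axioms_def is_group)

lemma h1class_self: "subgroup A G \<Longrightarrow> a \<in> carrier G \<Longrightarrow> a \<in> h1class G \<sigma> A a"
  unfolding h1class_def using subgroup.one_closed by force

lemma h1class_subset_of_mem:
  assumes A: "subgroup A G" and a: "a \<in> carrier G" and b: "b \<in> h1class G \<sigma> A a"
  shows "h1class G \<sigma> A b \<subseteq> h1class G \<sigma> A a"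
proof
  obtain g where g: "g \<in> A" and bg: "b = g \<otimes> a \<otimes> inv (\<sigma> g)"
    using b by (auto simp: h1class_def)
  fix z assume "z \<in> h1class G \<sigma> A b"
  then obtain k where k: "k \<in> A" and z: "z = k \<otimes> b \<otimes> inv (\<sigma> k)"
    by (auto simp: h1class_def)
  have "z = (k \<otimes> g) \<otimes> a \<otimes> inv (\<sigma> (k \<otimes> g))"
    using z bg a g k by (simp add: subgroup.mem_carrier[OF A] group_normalize)
  then show "z \<in> h1class G \<sigma> A a"
    using subgroup.m_closed[OF A k g] by (auto simp: h1class_def)
qed

lemma h1class_sym:
  assumes A: "subgroup A G" and a: "a \<in> carrier G" and b: "b \<in> h1class G \<sigma> A a"
  shows "a \<in> h1class G \<sigma> A b"
proof -
  obtain g where g: "g \<in> A" and bg: "b = g \<otimes> a \<otimes> inv (\<sigma> g)"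
    using b by (auto simp: h1class_def)
  have "a = inv g \<otimes> b \<otimes> inv (\<sigma> (inv g))"
    using bg a g by (simp add: subgroup.mem_carrier[OF A] group_normalize)
  then show ?thesis
    using subgroup.m_inv_closed[OF A g] by (auto simp: h1class_def)
qed

lemma h1class_eq_of_mem:
  assumes "subgroup A G" and "a \<in> carrier G" and "b \<in> h1class G \<sigma> A a"
  shows "h1class G \<sigma> A b = h1class G \<sigma> A a"
proof -
  have "b \<in> carrier G"
    using assms by (auto simp: h1class_def dest: subgroup.mem_carrier)
  then show ?thesis
    using assms h1class_subset_of_mem h1class_sym by (metis subset_antisym)
qed

lemma H1map_h1class:
  assumes A: "subgroup A G" and B: "subgroup B G" and "A \<subseteq> B" and a: "a \<in> carrier G"
  shows "H1map G \<sigma> B (h1class G \<sigma> A a) = h1class G \<sigma> B a"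
proof -
  have "(SOME b. b \<in> h1class G \<sigma> A a) \<in> h1class G \<sigma> A a"
    using h1class_self[OF A a] by (rule someI)
  then have "(SOME b. b \<in> h1class G \<sigma> A a) \<in> h1class G \<sigma> B a"
    using \<open>A \<subseteq> B\<close> by (auto simp: h1class_def)
  then show ?thesis
    unfolding H1map_def using h1class_eq_of_mem[OF B a] by simp
qed

lemma h1class_carrier_eq_one_iff:
  assumes a: "a \<in> carrier G"
  shows "h1class G \<sigma> (carrier G) a = h1class G \<sigma> (carrier G) \<one>
    \<longleftrightarrow> (\<exists>g \<in> carrier G. a = g \<otimes> inv (\<sigma> g))"
proof
  assume "h1class G \<sigma> (carrier G) a = h1class G \<sigma> (carrier G) \<one>"
  then have "a \<in> h1class G \<sigma> (carrier G) \<one>"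
    using h1class_self[OF subgroup_self a] by simp
  then show "\<exists>g \<in> carrier G. a = g \<otimes> inv (\<sigma> g)"
    by (auto simp: h1class_def)
next
  assume "\<exists>g \<in> carrier G. a = g \<otimes> inv (\<sigma> g)"
  then have "a \<in> h1class G \<sigma> (carrier G) \<one>"
    by (force simp: h1class_def)
  then show "h1class G \<sigma> (carrier G) a = h1class G \<sigma> (carrier G) \<one>"
    by (rule h1class_eq_of_mem[OF subgroup_self one_closed])
qed

lemma mem_H1ker_carrier_iff:
  assumes A: "subgroup A G"
  shows "c \<in> H1ker G \<sigma> A (carrier G) \<longleftrightarrow>
    (\<exists>a \<in> Z1 G \<sigma> A. (\<exists>g \<in> carrier G. a = g \<otimes> inv (\<sigma> g)) \<and> c = h1class G \<sigma> A a)"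
proof -
  have "H1map G \<sigma> (carrier G) (h1class G \<sigma> A a) = h1class G \<sigma> (carrier G) \<one>
      \<longleftrightarrow> (\<exists>g \<in> carrier G. a = g \<otimes> inv (\<sigma> g))" if "a \<in> Z1 G \<sigma> A" for a
  proof -
    have "a \<in> carrier G"
      using that subgroup.mem_carrier[OF A] by (simp add: Z1_def)
    then show ?thesis
      using H1map_h1class[OF A subgroup_self] h1class_carrier_eq_one_iff subgroup.subset[OF A]
      by simp
  qed
  then show ?thesis
    by (auto simp: H1ker_def H1_def)
qed

end

end

locale group_involution = group G for G (structure) +
  fixes \<theta> :: "'a \<Rightarrow> 'a"
  assumes theta_hom: "\<theta> \<in> hom G G"
    and theta_theta [simp]: "g \<in> carrier G \<Longrightarrow> \<theta> (\<theta> g) = g"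
begin

sublocale theta: group_hom G G \<theta>
  by (simp add: group_hom_def group_hom_axioms_def is_group theta_hom)

lemma iota_closed [simp]: "g \<in> carrier G \<Longrightarrow> iota G \<theta> g \<in> carrier G"
  by (simp add: iota_def)

lemma theta_iota: "g \<in> carrier G \<Longrightarrow> \<theta> (iota G \<theta> g) = inv (iota G \<theta> g)"
  by (simp add: iota_def group_normalize)

lemma iota_mult_left:
  "q \<in> carrier G \<Longrightarrow> g \<in> carrier G \<Longrightarrow> iota G \<theta> (q \<otimes> g) = q \<otimes> iota G \<theta> g \<otimes> inv (\<theta> q)"
  by (simp add: iota_def group_normalize)

lemma iota_mult_fixgroup:
  "g \<in> carrier G \<Longrightarrow> h \<in> fixgroup G \<theta> \<Longrightarrow> iota G \<theta> (g \<otimes> h) = iota G \<theta> g"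
  by (auto simp: iota_def fixgroup_def group_normalize)

lemma iota_eq_imp_fixgroup:
  assumes u: "u \<in> carrier G" and v: "v \<in> carrier G" and eq: "iota G \<theta> u = iota G \<theta> v"
  shows "inv v \<otimes> u \<in> fixgroup G \<theta>"
proof -
  have "inv v \<otimes> iota G \<theta> u \<otimes> \<theta> u = inv v \<otimes> iota G \<theta> v \<otimes> \<theta> u"
    using eq by simp
  then have "inv v \<otimes> u = inv (\<theta> v) \<otimes> \<theta> u"
    using u v by (simp add: iota_def group_normalize)
  then show ?thesis
    using u v by (simp add: fixgroup_def)
qed

lemma subgroup_fixgroup: "subgroup (fixgroup G \<theta>) G"
  by (rule subgroupI) (auto simp: fixgroup_def)

lemma mem_image_of_cocycle:
  assumes Q: "subgroup Q G" and cocycle: "\<theta> a = inv a" and a: "a \<in> Q"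
  shows "a \<in> \<theta> ` Q"
proof -
  have "a = \<theta> (inv a)"
    using cocycle subgroup.mem_carrier[OF Q a] by simp
  then show ?thesis
    using subgroup.m_inv_closed[OF Q a] by (rule image_eqI)
qed

lemma iotaQ_dcoset:
  assumes Q: "subgroup Q G" and y: "y \<in> carrier G"
  shows "iotaQ G \<theta> Q (dcoset G Q y (fixgroup G \<theta>)) = dcoset G Q (iota G \<theta> y) (\<theta> ` Q)"
proof -
  let ?D = "dcoset G Q y (fixgroup G \<theta>)"
  have "(SOME g. g \<in> ?D) \<in> ?D"
    using dcoset_self[OF Q subgroup_fixgroup y] by (rule someI)
  then obtain q h where q: "q \<in> Q" and h: "h \<in> fixgroup G \<theta>"
    and rep: "(SOME g. g \<in> ?D) = q \<otimes> y \<otimes> h"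
    by (auto simp: dcoset_def)
  have qc: "q \<in> carrier G" and hc: "h \<in> carrier G"
    using q h subgroup.mem_carrier[OF Q] by (auto simp: fixgroup_def)
  have "iota G \<theta> (SOME g. g \<in> ?D) = q \<otimes> iota G \<theta> y \<otimes> \<theta> (inv q)"
    using qc y hc h by (simp add: rep iota_mult_fixgroup iota_mult_left)
  then have "iota G \<theta> (SOME g. g \<in> ?D) \<in> dcoset G Q (iota G \<theta> y) (\<theta> ` Q)"
    using dcoset_mem[OF q] subgroup.m_inv_closed[OF Q q] by simp
  then show ?thesis
    unfolding iotaQ_def
    using dcoset_eq_of_mem[OF Q theta.subgroup_img_is_subgroup[OF Q]] y by simp
qed

lemma xtheta_eq:
  "x \<in> carrier G \<Longrightarrow> y \<in> carrier G \<Longrightarrow> xtheta G \<theta> x y = iota G \<theta> x \<otimes> \<theta> y \<otimes> inv (iota G \<theta> x)"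
  by (simp add: xtheta_def iota_def group_normalize)

lemma group_involution_xtheta:
  assumes x: "x \<in> carrier G"
  shows "group_involution G (xtheta G \<theta> x)"
proof
  show "xtheta G \<theta> x \<in> hom G G"
    unfolding hom_def using x by (auto simp: xtheta_eq group_normalize)
  show "xtheta G \<theta> x (xtheta G \<theta> x g) = g" if "g \<in> carrier G" for g
    using x that by (simp add: xtheta_eq theta_iota group_normalize)
qed

end

locale iota_fibre = group_involution +
  fixes Q and x
  assumes subgroup_Q: "subgroup Q G" and x_closed: "x \<in> carrier G"
begin

abbreviation "H \<equiv> fixgroup G \<theta>"
abbreviation "\<sigma> \<equiv> xtheta G \<theta> x"
abbreviation "Q\<^sub>x \<equiv> Qx G \<theta> Q x"

sublocale sigma: group_involution G \<sigma>
  by (rule group_involution_xtheta[OF x_closed])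

definition cocycle :: "'a \<Rightarrow> 'a" where
  "cocycle y = iota G \<theta> y \<otimes> inv (iota G \<theta> x)"

definition fibre_reps :: "'a set" where
  "fibre_reps = {y \<in> carrier G. cocycle y \<in> Q}"

lemma Q_closed: "q \<in> Q \<Longrightarrow> q \<in> carrier G"
  using subgroup.mem_carrier[OF subgroup_Q] .

lemma cocycle_closed: "y \<in> carrier G \<Longrightarrow> cocycle y \<in> carrier G"
  using x_closed by (simp add: cocycle_def)

lemma cocycle_eq_coboundary:
  "y \<in> carrier G \<Longrightarrow> cocycle y = iota G \<sigma> (y \<otimes> inv x)"
  using x_closed by (simp add: cocycle_def iota_def xtheta_eq group_normalize)

lemma cocycle_mult_left:
  "q \<in> carrier G \<Longrightarrow> y \<in> carrier G \<Longrightarrow> cocycle (q \<otimes> y) = q \<otimes> cocycle y \<otimes> inv (\<sigma> q)"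
  using x_closed by (simp add: cocycle_def iota_mult_left xtheta_eq group_normalize)

lemma sigma_cocycle: "y \<in> carrier G \<Longrightarrow> \<sigma> (cocycle y) = inv (cocycle y)"
  using x_closed by (simp add: cocycle_eq_coboundary sigma.theta_iota)

lemma subgroup_Qx: "subgroup Q\<^sub>x G"
  unfolding Qx_def
  using subgroups_Inter_pair subgroup_Q sigma.theta.subgroup_img_is_subgroup by blast

lemma cocycle_in_Qx_iff: "y \<in> carrier G \<Longrightarrow> cocycle y \<in> Q\<^sub>x \<longleftrightarrow> cocycle y \<in> Q"
  using sigma.mem_image_of_cocycle[OF subgroup_Q sigma_cocycle] by (auto simp: Qx_def)

lemma iotaQ_eq_iff:
  assumes "y \<in> carrier G"
  shows "iotaQ G \<theta> Q (dcoset G Q y H) = iotaQ G \<theta> Q (dcoset G Q x H)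
    \<longleftrightarrow> iota G \<theta> y \<in> dcoset G Q (iota G \<theta> x) (\<theta> ` Q)"
  using assms x_closed subgroup_Q theta.subgroup_img_is_subgroup[OF subgroup_Q]
  by (simp add: iotaQ_dcoset dcoset_eq_iff_mem)

lemma cocycle_mult_fixgroup: "y \<in> carrier G \<Longrightarrow> h \<in> H \<Longrightarrow> cocycle (y \<otimes> h) = cocycle y"
  by (simp add: cocycle_def iota_mult_fixgroup)

lemma cocycle_eq_iff:
  "u \<in> carrier G \<Longrightarrow> v \<in> carrier G \<Longrightarrow> cocycle u = cocycle v \<longleftrightarrow> iota G \<theta> u = iota G \<theta> v"
  using x_closed by (simp add: cocycle_def)

lemma twisting_element_in_Qx:
  assumes q: "q \<in> Q" and a: "a \<in> Q" and b: "b \<in> Q" and eq: "b = q \<otimes> a \<otimes> inv (\<sigma> q)"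
  shows "q \<in> Q\<^sub>x"
proof -
  have "\<sigma> q = inv (inv a \<otimes> inv q \<otimes> b)"
    using eq q a b by (simp add: Q_closed group_normalize)
  also have "\<dots> \<in> Q"
    using q a b subgroup_Q by (simp add: subgroup.m_closed subgroup.m_inv_closed)
  finally have "\<sigma> q \<in> Q" .
  moreover have "q = \<sigma> (\<sigma> q)"
    using q by (simp add: Q_closed)
  ultimately have "q \<in> \<sigma> ` Q"
    by (intro image_eqI)
  then show ?thesis
    using q by (simp add: Qx_def)
qed

lemma fibre_eq_image_fibre_reps:
  "{D \<in> dcosets G Q H. iotaQ G \<theta> Q D = iotaQ G \<theta> Q (dcoset G Q x H)}
    = (\<lambda>y. dcoset G Q y H) ` fibre_reps"
proof (intro equalityI subsetI)
  fix D assume "D \<in> {D \<in> dcosets G Q H. iotaQ G \<theta> Q D = iotaQ G \<theta> Q (dcoset G Q x H)}"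
  then obtain g where g: "g \<in> carrier G" and D: "D = dcoset G Q g H"
    and "iotaQ G \<theta> Q (dcoset G Q g H) = iotaQ G \<theta> Q (dcoset G Q x H)"
    by (auto simp: dcosets_def)
  then have "iota G \<theta> g \<in> dcoset G Q (iota G \<theta> x) (\<theta> ` Q)"
    using iotaQ_eq_iff[OF g] by simp
  then obtain q q' where q: "q \<in> Q" and q': "q' \<in> Q"
    and iota_g: "iota G \<theta> g = q \<otimes> iota G \<theta> x \<otimes> \<theta> q'"
    by (auto simp: dcoset_def)
  \<comment> \<open>left multiplication by \<open>q'\<close> cancels the factor \<open>\<theta> q'\<close> of \<open>\<iota> g\<close>\<close>
  define y where "y = q' \<otimes> g"
  have y: "y \<in> carrier G"
    using g q' by (simp add: y_def Q_closed)
  have "cocycle y = q' \<otimes> q"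
    using g q q' x_closed
    by (simp add: y_def cocycle_def iota_mult_left iota_g Q_closed group_normalize)
  then have "y \<in> fibre_reps"
    using y q q' subgroup_Q by (simp add: fibre_reps_def subgroup.m_closed)
  moreover have "D = dcoset G Q y H"
    using dcoset_mem[of q' Q \<one> H g] q' g D
      dcoset_eq_of_mem[OF subgroup_Q subgroup_fixgroup g]
    by (simp add: y_def Q_closed subgroup.one_closed[OF subgroup_fixgroup])
  ultimately show "D \<in> (\<lambda>y. dcoset G Q y H) ` fibre_reps"
    by blast
next
  fix D assume "D \<in> (\<lambda>y. dcoset G Q y H) ` fibre_reps"
  then obtain y where y: "y \<in> carrier G" and c: "cocycle y \<in> Q" and D: "D = dcoset G Q y H"
    by (auto simp: fibre_reps_def)
  have "iota G \<theta> y = cocycle y \<otimes> iota G \<theta> x \<otimes> \<theta> \<one>"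
    using y x_closed by (simp add: cocycle_def group_normalize)
  then have "iota G \<theta> y \<in> dcoset G Q (iota G \<theta> x) (\<theta> ` Q)"
    using dcoset_mem[OF c imageI[OF subgroup.one_closed[OF subgroup_Q]], of "iota G \<theta> x" \<theta>]
    by simp
  then show "D \<in> {D \<in> dcosets G Q H. iotaQ G \<theta> Q D = iotaQ G \<theta> Q (dcoset G Q x H)}"
    using y D by (auto simp: iotaQ_eq_iff dcosets_def)
qed

lemma dcoset_eq_iff_h1class_eq:
  assumes y: "y \<in> fibre_reps" and y': "y' \<in> fibre_reps"
  shows "dcoset G Q y H = dcoset G Q y' H
    \<longleftrightarrow> h1class G \<sigma> Q\<^sub>x (cocycle y) = h1class G \<sigma> Q\<^sub>x (cocycle y')"
proof
  assume "dcoset G Q y H = dcoset G Q y' H"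
  then have "y' \<in> dcoset G Q y H"
    using y' dcoset_self[OF subgroup_Q subgroup_fixgroup] by (simp add: fibre_reps_def)
  then obtain q h where q: "q \<in> Q" and h: "h \<in> H" and y'_eq: "y' = q \<otimes> y \<otimes> h"
    by (auto simp: dcoset_def)
  have c': "cocycle y' = q \<otimes> cocycle y \<otimes> inv (\<sigma> q)"
    using y q h by (simp add: y'_eq cocycle_mult_fixgroup cocycle_mult_left fibre_reps_def Q_closed)
  then have "q \<in> Q\<^sub>x"
    using twisting_element_in_Qx[OF q _ _ c'] y y' by (simp add: fibre_reps_def)
  then have "cocycle y' \<in> h1class G \<sigma> Q\<^sub>x (cocycle y)"
    using c' by (auto simp: h1class_def)
  moreover have "cocycle y \<in> carrier G"
    using y cocycle_closed by (simp add: fibre_reps_def)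
  ultimately show "h1class G \<sigma> Q\<^sub>x (cocycle y) = h1class G \<sigma> Q\<^sub>x (cocycle y')"
    using h1class_eq_of_mem[OF sigma.theta_hom subgroup_Qx] by simp
next
  assume "h1class G \<sigma> Q\<^sub>x (cocycle y) = h1class G \<sigma> Q\<^sub>x (cocycle y')"
  then have "cocycle y' \<in> h1class G \<sigma> Q\<^sub>x (cocycle y)"
    using h1class_self[OF sigma.theta_hom subgroup_Qx] y' cocycle_closed
    by (simp add: fibre_reps_def)
  then obtain q where q: "q \<in> Q\<^sub>x" and c': "cocycle y' = q \<otimes> cocycle y \<otimes> inv (\<sigma> q)"
    by (auto simp: h1class_def)
  have qc: "q \<in> carrier G" and yc: "y \<in> carrier G" and y'c: "y' \<in> carrier G"
    using q y y' by (auto simp: Qx_def fibre_reps_def Q_closed)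
  have "cocycle y' = cocycle (q \<otimes> y)"
    using c' qc yc by (simp add: cocycle_mult_left)
  then have "inv (q \<otimes> y) \<otimes> y' \<in> H"
    using qc yc y'c by (intro iota_eq_imp_fixgroup) (simp_all add: cocycle_eq_iff)
  then have "y' \<in> dcoset G Q y H"
    using dcoset_mem[of q Q "inv (q \<otimes> y) \<otimes> y'" H y] q qc yc y'c
    by (simp add: Qx_def group_normalize)
  then show "dcoset G Q y H = dcoset G Q y' H"
    using dcoset_eq_of_mem[OF subgroup_Q subgroup_fixgroup yc] by simp
qed

lemma H1ker_eq_image_fibre_reps:
  "H1ker G \<sigma> Q\<^sub>x (carrier G) = (\<lambda>y. h1class G \<sigma> Q\<^sub>x (cocycle y)) ` fibre_reps"
proof (intro equalityI subsetI)
  fix c assume "c \<in> H1ker G \<sigma> Q\<^sub>x (carrier G)"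
  then obtain a g where a: "a \<in> Z1 G \<sigma> Q\<^sub>x" and g: "g \<in> carrier G"
    and a_eq: "a = g \<otimes> inv (\<sigma> g)" and c: "c = h1class G \<sigma> Q\<^sub>x a"
    by (auto simp: mem_H1ker_carrier_iff[OF sigma.theta_hom subgroup_Qx])
  have "cocycle (g \<otimes> x) = a"
    using g x_closed by (simp add: a_eq cocycle_eq_coboundary iota_def group_normalize)
  moreover have "g \<otimes> x \<in> fibre_reps"
    using a g x_closed calculation by (simp add: fibre_reps_def Z1_def Qx_def)
  ultimately show "c \<in> (\<lambda>y. h1class G \<sigma> Q\<^sub>x (cocycle y)) ` fibre_reps"
    using c by blast
next
  fix c assume "c \<in> (\<lambda>y. h1class G \<sigma> Q\<^sub>x (cocycle y)) ` fibre_reps"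
  then obtain y where y: "y \<in> carrier G" and "cocycle y \<in> Q"
    and c: "c = h1class G \<sigma> Q\<^sub>x (cocycle y)"
    by (auto simp: fibre_reps_def)
  then have "cocycle y \<in> Z1 G \<sigma> Q\<^sub>x"
    by (simp add: Z1_def cocycle_in_Qx_iff sigma_cocycle)
  moreover have "cocycle y = (y \<otimes> inv x) \<otimes> inv (\<sigma> (y \<otimes> inv x))"
    using y by (simp add: cocycle_eq_coboundary iota_def)
  moreover have "y \<otimes> inv x \<in> carrier G"
    using y x_closed by simp
  ultimately show "c \<in> H1ker G \<sigma> Q\<^sub>x (carrier G)"
    unfolding mem_H1ker_carrier_iff[OF sigma.theta_hom subgroup_Qx] using c by blast
qed

end

theorem mainTheorem10:
  fixes G (structure) and \<theta> :: "'a \<Rightarrow> 'a" and Q :: "'a set" and x :: 'a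
  assumes "group G"
    and "\<theta> \<in> hom G G"
    and "\<forall>g \<in> carrier G. \<theta> (\<theta> g) = g"
    and "subgroup Q G"
    and "x \<in> carrier G"
  shows "\<exists>\<Phi>. bij_betw \<Phi>
            {D \<in> dcosets G Q (fixgroup G \<theta>).
               iotaQ G \<theta> Q D = iotaQ G \<theta> Q (dcoset G Q x (fixgroup G \<theta>))}
            (H1ker G (xtheta G \<theta> x) (Qx G \<theta> Q x) (carrier G))
         \<and> (\<forall>D \<in> dcosets G Q (fixgroup G \<theta>). \<forall>y \<in> D.
               iotaQ G \<theta> Q D = iotaQ G \<theta> Q (dcoset G Q x (fixgroup G \<theta>)) \<longrightarrow>
               iota G \<theta> y \<otimes> inv (iota G \<theta> x) \<in> Qx G \<theta> Q x \<longrightarrow>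
               \<Phi> D = h1class G (xtheta G \<theta> x) (Qx G \<theta> Q x)
                        (iota G \<theta> y \<otimes> inv (iota G \<theta> x)))"
proof -
  interpret iota_fibre G \<theta> Q x
    using assms by (simp add: iota_fibre_def iota_fibre_axioms_def
        group_involution_def group_involution_axioms_def)
  obtain \<Phi> where bij: "bij_betw \<Phi>
      {D \<in> dcosets G Q H. iotaQ G \<theta> Q D = iotaQ G \<theta> Q (dcoset G Q x H)}
      (H1ker G \<sigma> Q\<^sub>x (carrier G))"
    and \<Phi>: "\<forall>y \<in> fibre_reps. \<Phi> (dcoset G Q y H) = h1class G \<sigma> Q\<^sub>x (cocycle y)"
    using ex_bij_betw_factor[OF fibre_eq_image_fibre_reps[symmetric]
        H1ker_eq_image_fibre_reps[symmetric] dcoset_eq_iff_h1class_eq]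
    by blast
  have "\<Phi> D = h1class G \<sigma> Q\<^sub>x (cocycle y)"
    if "D \<in> dcosets G Q H" and "y \<in> D" and "cocycle y \<in> Q\<^sub>x" for D y
    using dcosets_eq_dcoset_of_mem[OF subgroup_Q subgroup_fixgroup that(1,2)] that(3) \<Phi>
    by (auto simp: fibre_reps_def Qx_def)
  with bij show ?thesis
    by (auto simp: cocycle_def)
qed

end
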